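(* Let $P=(p_1,\dots,p_n)$ be points in $\mathbb{R}^d$, $\mathcal{F}$ a constraint for $k$-CMedian, and $\mathcal{C}=\{c_1,\dots,c_k\}\subset\mathbb{R}^d$ with $\omega=\frac1n\sum_{i=1}^n\min_{c\in\mathcal{C}}\|p_i-c\|$. For each $i$ let $\tilde p_i$ be a point of $\mathcal{C}$ nearest to $p_i$, $\tilde P=(\tilde p_1,\dots,\tilde p_n)$, and $\tilde\mu_{opt}$ the optimal $k$-CMedian value of $\tilde P$. Let $\mu_{opt}([\mathcal{C}]^k)=\min_{(S_j)\in\mathcal{F}}\min_{(q_1,\dots,q_k)\in\mathcal{C}^k}\frac1n\sum_j\sum_{i\in S_j}\|p_i-q_j\|$. Then $\mu_{opt}([\mathcal{C}]^k)\le\omega+2\tilde\mu_{opt}$.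
   Context: A constraint for $k$-CMedian is a nonempty family $\mathcal{F}$ of ordered partitions $(S_1,\dots,S_k)$ of $\{1,\dots,n\}$ into $k$ parts. For a sequence $X=(x_1,\dots,x_n)$ its optimal $k$-CMedian value is $\min_{(S_j)\in\mathcal{F}}\min_{c'_1,\dots,c'_k\in\mathbb{R}^d}\frac1n\sum_j\sum_{i\in S_j}\|x_i-c'_j\|$. *)

theory Defs
  imports "HOL-Analysis.Analysis"
begin

definition ordered_partition :: "nat \<Rightarrow> nat \<Rightarrow> (nat \<Rightarrow> nat set) \<Rightarrow> bool" where
  "ordered_partition n k S \<longleftrightarrow>
     (\<Union>j\<in>{1..k}. S j) = {1..n} \<and>
     (\<forall>j\<in>{1..k}. \<forall>j'\<in>{1..k}. j \<noteq> j' \<longrightarrow> S j \<inter> S j' = {}) \<and>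
     (\<forall>j. j \<notin> {1..k} \<longrightarrow> S j = {})"

definition cmedian_constraint :: "nat \<Rightarrow> nat \<Rightarrow> (nat \<Rightarrow> nat set) set \<Rightarrow> bool" where
  "cmedian_constraint n k F \<longleftrightarrow> F \<noteq> {} \<and> (\<forall>S\<in>F. ordered_partition n k S)"

definition cm_cost :: "nat \<Rightarrow> nat \<Rightarrow> (nat \<Rightarrow> 'a::real_normed_vector) \<Rightarrow> (nat \<Rightarrow> nat set)
                        \<Rightarrow> (nat \<Rightarrow> 'a) \<Rightarrow> real" where
  "cm_cost n k X S c = (1 / real n) * (\<Sum>j\<in>{1..k}. \<Sum>i\<in>S j. norm (X i - c j))"

definition cmedian_opt :: "nat \<Rightarrow> nat \<Rightarrow> (nat \<Rightarrow> nat set) set \<Rightarrow> (nat \<Rightarrow> 'a::real_normed_vector) \<Rightarrow> real" where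
  "cmedian_opt n k F X = (INF S\<in>F. INF c\<in>(UNIV :: (nat \<Rightarrow> 'a) set). cm_cost n k X S c)"

definition cmedian_opt_restr :: "nat \<Rightarrow> nat \<Rightarrow> (nat \<Rightarrow> nat set) set \<Rightarrow> 'a set
                                  \<Rightarrow> (nat \<Rightarrow> 'a::real_normed_vector) \<Rightarrow> real" where
  "cmedian_opt_restr n k F C X =
     (INF S\<in>F. INF q\<in>{q. \<forall>j\<in>{1..k}. q j \<in> C}. cm_cost n k X S q)"

end

theory Submission
  imports Defs
begin

text \<open>Take any partition S of the constraint and any centers c'_j for the rounded points,
  and move each c'_j to a nearest point q_j of C. Every rounded point p~_i lies in C, so q_j is
  at least as close to c'_j as p~_i is, and the triangle inequality gives
  ||p_i - q_j|| <= ||p_i - p~_i|| + 2 ||p~_i - c'_j||. Summed over S, the first terms add up to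
  n \<omega> and the second ones to 2n times the cost of (S, c') for the rounded points.\<close>

lemma dist_to_nearest_le:
  fixes p p' x q :: "'a::metric_space"
  assumes "p' \<in> C" and "\<forall>y\<in>C. dist x q \<le> dist x y"
  shows "dist p q \<le> dist p p' + 2 * dist p' x"
proof -
  have "dist p q \<le> dist p p' + dist p' x + dist x q"
    by (metis add_right_mono dist_triangle order_trans)
  moreover have "dist x q \<le> dist p' x"
    using assms by (simp add: dist_commute)
  ultimately show ?thesis by linarith
qed

lemma ex_nearest_points:
  fixes x :: "'b \<Rightarrow> 'a::metric_space"
  assumes "finite C" and "C \<noteq> {}"
  obtains q where "\<And>j. q j \<in> C" and "\<And>j. \<forall>y\<in>C. dist (x j) (q j) \<le> dist (x j) y"
proof -
  have "\<forall>j. \<exists>z. z \<in> C \<and> (\<forall>y\<in>C. dist (x j) z \<le> dist (x j) y)"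
  proof
    fix j
    obtain z where "is_arg_min (dist (x j)) (\<lambda>y. y \<in> C) z"
      using ex_is_arg_min_if_finite[OF assms] by blast
    then show "\<exists>z. z \<in> C \<and> (\<forall>y\<in>C. dist (x j) z \<le> dist (x j) y)"
      by (auto simp: is_arg_min_linorder)
  qed
  then show ?thesis using that by metis
qed

lemma sum_ordered_partition:
  assumes "ordered_partition n k S"
  shows "(\<Sum>j\<in>{1..k}. \<Sum>i\<in>S j. f i) = (\<Sum>i\<in>{1..n}. f i)"
proof -
  have parts: "(\<Union>j\<in>{1..k}. S j) = {1..n}"
    using assms by (simp add: ordered_partition_def)
  then have "finite (S j)" if "j \<in> {1..k}" for j
    using that by (metis UN_upper finite_atLeastAtMost finite_subset)
  then have "(\<Sum>i\<in>(\<Union>j\<in>{1..k}. S j). f i) = (\<Sum>j\<in>{1..k}. \<Sum>i\<in>S j. f i)"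
    using assms unfolding ordered_partition_def by (intro sum.UNION_disjoint) auto
  then show ?thesis by (metis parts)
qed

lemma cm_cost_nonneg: "cm_cost n k X S c \<ge> 0"
  by (simp add: cm_cost_def sum_nonneg)

lemma cmedian_opt_restr_le_cm_cost:
  assumes "S \<in> F" and "\<forall>j\<in>{1..k}. q j \<in> C"
  shows "cmedian_opt_restr n k F C X \<le> cm_cost n k X S q"
proof -
  let ?Q = "{q. \<forall>j\<in>{1..k}. q j \<in> C}"
  have "(INF q'\<in>?Q. cm_cost n k X S q') \<le> cm_cost n k X S q"
    using assms(2) by (intro cINF_lower) (auto intro!: bdd_belowI[of _ 0] cm_cost_nonneg)
  moreover have "?Q \<noteq> {}"
    using assms(2) by blast
  then have "cmedian_opt_restr n k F C X \<le> (INF q'\<in>?Q. cm_cost n k X S q')"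
    unfolding cmedian_opt_restr_def using assms(1)
    by (intro cINF_lower) (auto intro!: bdd_belowI[of _ 0] cINF_greatest cm_cost_nonneg)
  ultimately show ?thesis by linarith
qed

lemma le_cmedian_opt:
  assumes "F \<noteq> {}" and "\<And>S c. S \<in> F \<Longrightarrow> a \<le> cm_cost n k X S c"
  shows "a \<le> cmedian_opt n k F X"
  unfolding cmedian_opt_def using assms by (intro cINF_greatest) auto

lemma cm_cost_snapped_le:
  fixes P Ptil c q :: "nat \<Rightarrow> 'a::real_normed_vector"
  assumes "ordered_partition n k S"
    and "\<forall>i\<in>{1..n}. Ptil i \<in> C"
    and "\<And>j. \<forall>y\<in>C. dist (c j) (q j) \<le> dist (c j) y"
  shows "cm_cost n k P S q
           \<le> (1 / real n) * (\<Sum>i\<in>{1..n}. norm (P i - Ptil i)) + 2 * cm_cost n k Ptil S c"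
proof -
  have parts: "(\<Union>j\<in>{1..k}. S j) = {1..n}"
    using assms(1) by (simp add: ordered_partition_def)
  have pointwise: "norm (P i - q j) \<le> norm (P i - Ptil i) + 2 * norm (Ptil i - c j)"
    if "i \<in> S j" "j \<in> {1..k}" for i j
  proof -
    have "Ptil i \<in> C"
      using assms(2) parts that by blast
    from dist_to_nearest_le[OF this assms(3)] show ?thesis
      by (simp add: dist_norm)
  qed
  have "(\<Sum>j\<in>{1..k}. \<Sum>i\<in>S j. norm (P i - q j))
      \<le> (\<Sum>j\<in>{1..k}. \<Sum>i\<in>S j. norm (P i - Ptil i) + 2 * norm (Ptil i - c j))"
    using pointwise by (intro sum_mono) auto
  also have "\<dots> = (\<Sum>j\<in>{1..k}. \<Sum>i\<in>S j. norm (P i - Ptil i))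
                  + 2 * (\<Sum>j\<in>{1..k}. \<Sum>i\<in>S j. norm (Ptil i - c j))"
    by (simp add: sum.distrib sum_distrib_left)
  also have "(\<Sum>j\<in>{1..k}. \<Sum>i\<in>S j. norm (P i - Ptil i)) = (\<Sum>i\<in>{1..n}. norm (P i - Ptil i))"
    by (rule sum_ordered_partition[OF assms(1)])
  finally have "(\<Sum>j\<in>{1..k}. \<Sum>i\<in>S j. norm (P i - q j)) / real n
      \<le> ((\<Sum>i\<in>{1..n}. norm (P i - Ptil i)) + 2 * (\<Sum>j\<in>{1..k}. \<Sum>i\<in>S j. norm (Ptil i - c j)))
         / real n"
    by (rule divide_right_mono) simp
  then show ?thesis
    unfolding cm_cost_def by (simp add: add_divide_distrib)
qed

theorem lemma13:
  fixes P :: "nat \<Rightarrow> 'a::euclidean_space"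
    and c :: "nat \<Rightarrow> 'a"
    and Ptil :: "nat \<Rightarrow> 'a"
    and F :: "(nat \<Rightarrow> nat set) set"
    and n k :: nat
    and \<omega> :: real
  assumes "n \<ge> 1" and "k \<ge> 1"
    and "cmedian_constraint n k F"
    and "\<omega> = (1 / real n) * (\<Sum>i\<in>{1..n}. Min ((\<lambda>x. norm (P i - x)) ` (c ` {1..k})))"
    and "\<forall>i\<in>{1..n}. Ptil i \<in> c ` {1..k} \<and>
           (\<forall>x\<in>c ` {1..k}. norm (P i - Ptil i) \<le> norm (P i - x))"
  shows "cmedian_opt_restr n k F (c ` {1..k}) P \<le> \<omega> + 2 * cmedian_opt n k F Ptil"
proof -
  define C where "C = c ` {1..k}"
  have "finite C" and "C \<noteq> {}"
    using assms(2) by (auto simp: C_def)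
  have "Min ((\<lambda>x. norm (P i - x)) ` C) = norm (P i - Ptil i)" if "i \<in> {1..n}" for i
    using assms(5) that \<open>finite C\<close> by (intro Min_eqI) (auto simp: C_def)
  then have \<omega>_eq: "\<omega> = (1 / real n) * (\<Sum>i\<in>{1..n}. norm (P i - Ptil i))"
    using assms(4) by (simp add: C_def)
  have "cmedian_opt_restr n k F C P \<le> \<omega> + 2 * cm_cost n k Ptil S c'"
    if "S \<in> F" for S c'
  proof -
    obtain q where in_C: "\<And>j. q j \<in> C"
      and nearest: "\<And>j. \<forall>y\<in>C. dist (c' j) (q j) \<le> dist (c' j) y"
      using ex_nearest_points[OF \<open>finite C\<close> \<open>C \<noteq> {}\<close>] by blast
    have "ordered_partition n k S"
      using assms(3) that by (simp add: cmedian_constraint_def)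
    moreover have "\<forall>i\<in>{1..n}. Ptil i \<in> C"
      using assms(5) by (simp add: C_def)
    ultimately have "cm_cost n k P S q \<le> \<omega> + 2 * cm_cost n k Ptil S c'"
      unfolding \<omega>_eq using nearest by (rule cm_cost_snapped_le)
    moreover have "cmedian_opt_restr n k F C P \<le> cm_cost n k P S q"
      using in_C by (intro cmedian_opt_restr_le_cm_cost[OF that]) blast
    ultimately show ?thesis by linarith
  qed
  then have "(cmedian_opt_restr n k F C P - \<omega>) / 2 \<le> cmedian_opt n k F Ptil"
    using assms(3) by (intro le_cmedian_opt) (auto simp: cmedian_constraint_def field_simps)
  then show ?thesis
    by (simp add: C_def)
qed

end
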